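(* Let $g(\mathbf{x})=\pi\,\phi_1(\mathbf{x})+(1-\pi)\,\phi_2(\mathbf{x})$, $\mathbf{x}\in\mathbb{R}^D$, be a mixture of two multivariate normal densities $\phi_j(\mathbf{x})=\phi(\mathbf{x};\boldsymbol{\mu}_j,\Sigma_j)$. Then for $\alpha\in[0,1]$, $$\kappa(\alpha)=[p(\alpha)]^2\,[1-\alpha\bar\alpha\,p(\alpha)],$$ where $\bar\alpha=1-\alpha$ and $p(\alpha)=(\boldsymbol{\mu}_2-\boldsymbol{\mu}_1)'\Sigma_1^{-1}S_\alpha^{-1}\Sigma_2^{-1}S_\alpha^{-1}\Sigma_2^{-1}S_\alpha^{-1}\Sigma_1^{-1}(\boldsymbol{\mu}_2-\boldsymbol{\mu}_1)$.
   Context: $\phi(\mathbf{x};\boldsymbol{\mu},\Sigma)$ is the normal density with mean $\boldsymbol{\mu}$ and positive definite covariance $\Sigma$. $S_\alpha=\bar\alpha\Sigma_1^{-1}+\alpha\Sigma_2^{-1}$, and the ridgeline is $\mathbf{x}^*(\alpha)=S_\alpha^{-1}[\bar\alpha\Sigma_1^{-1}\boldsymbol{\mu}_1+\alpha\Sigma_2^{-1}\boldsymbol{\mu}_2]$. Write $\phi_j(\alpha)=\phi_j(\mathbf{x}^*(\alpha))$, with primes denoting derivatives in $\alpha$. The curvature function is $$\kappa(\alpha)=\frac{\phi_2''(\alpha)\phi_1'(\alpha)}{\phi_2(\alpha)\phi_1(\alpha)}-\frac{\phi_1''(\alpha)\phi_2'(\alpha)}{\phi_1(\alpha)\phi_2(\alpha)}.$$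 *)

theory Defs
  imports "HOL-Analysis.Analysis"
begin

definition pos_def_mat :: "real^'n^'n \<Rightarrow> bool" where
  "pos_def_mat A \<longleftrightarrow> transpose A = A \<and> (\<forall>x. x \<noteq> 0 \<longrightarrow> x \<bullet> (A *v x) > 0)"

definition normal_density :: "real^'n \<Rightarrow> real^'n \<Rightarrow> real^'n^'n \<Rightarrow> real" where
  "normal_density x mu Sig =
     (2 * pi) powr (- real CARD('n) / 2) * (det Sig) powr (-1/2) *
     exp (- (1/2) * ((x - mu) \<bullet> (matrix_inv Sig *v (x - mu))))"

definition S_mat :: "real^'n^'n \<Rightarrow> real^'n^'n \<Rightarrow> real \<Rightarrow> real^'n^'n" where
  "S_mat Sig1 Sig2 a = (1 - a) *\<^sub>R matrix_inv Sig1 + a *\<^sub>R matrix_inv Sig2"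

definition ridgeline :: "real^'n \<Rightarrow> real^'n^'n \<Rightarrow> real^'n \<Rightarrow> real^'n^'n \<Rightarrow> real \<Rightarrow> real^'n" where
  "ridgeline mu1 Sig1 mu2 Sig2 a =
     matrix_inv (S_mat Sig1 Sig2 a) *v
       ((1 - a) *\<^sub>R (matrix_inv Sig1 *v mu1) + a *\<^sub>R (matrix_inv Sig2 *v mu2))"

definition phi_ridge :: "real^'n \<Rightarrow> real^'n^'n \<Rightarrow> real^'n \<Rightarrow> real^'n^'n \<Rightarrow> real^'n \<Rightarrow> real^'n^'n \<Rightarrow> real \<Rightarrow> real" where
  "phi_ridge mu1 Sig1 mu2 Sig2 mu Sig a =
     normal_density (ridgeline mu1 Sig1 mu2 Sig2 a) mu Sig"

definition kappa :: "real^'n \<Rightarrow> real^'n^'n \<Rightarrow> real^'n \<Rightarrow> real^'n^'n \<Rightarrow> real \<Rightarrow> real" where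
  "kappa mu1 Sig1 mu2 Sig2 a =
     (let f1 = phi_ridge mu1 Sig1 mu2 Sig2 mu1 Sig1;
          f2 = phi_ridge mu1 Sig1 mu2 Sig2 mu2 Sig2
      in deriv (deriv f2) a * deriv f1 a / (f2 a * f1 a)
         - deriv (deriv f1) a * deriv f2 a / (f1 a * f2 a))"

end

theory Submission
  imports Defs
begin

(* Write A = Sig1^-1, B = Sig2^-1, S = (1 - a) A + a B, d = mu2 - mu1 and h = B S^-1 A d.
   Since A S^-1 B = B S^-1 A, the ridgeline satisfies A (x* - mu1) = a h and
   B (x* - mu2) = -(1 - a) h, and it moves with velocity S^-1 h. Hence
   (log phi1)' = -a p and (log phi2)' = (1 - a) p with p = h . S^-1 h, which is the p of
   the statement. Differentiating once more, p' enters the two terms of kappa with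
   cancelling coefficients, leaving p^2 (1 - a (1 - a) p). As a may be an endpoint of
   [0, 1], derivatives are taken where S is merely invertible, an open condition. *)

section \<open>Matrix inverses and positive definite matrices\<close>

lemma
  fixes M :: "'a::semiring_1^'n^'m"
  assumes "invertible M"
  shows matrix_inv_right: "M ** matrix_inv M = mat 1"
    and matrix_inv_left: "matrix_inv M ** M = mat 1"
proof -
  have "M ** matrix_inv M = mat 1 \<and> matrix_inv M ** M = mat 1"
    using assms unfolding invertible_def matrix_inv_def by (rule someI_ex)
  then show "M ** matrix_inv M = mat 1" "matrix_inv M ** M = mat 1" by auto
qed

lemma
  fixes M :: "'a::semiring_1^'n^'m"
  assumes "invertible M"
  shows matrix_inv_cancel_left: "M *v (matrix_inv M *v y) = y"
    and matrix_inv_cancel_right: "matrix_inv M *v (M *v x) = x"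
  by (simp_all add: matrix_vector_mul_assoc matrix_inv_right matrix_inv_left assms)

lemma invertible_if_kernel_trivial:
  fixes M :: "real^'n^'n"
  assumes "\<And>x. M *v x = 0 \<Longrightarrow> x = 0"
  shows "invertible M"
  using assms matrix_left_invertible_ker invertible_left_inverse by blast

lemma transpose_matrix_inv_symmetric:
  fixes M :: "'a::comm_semiring_1^'n^'n"
  assumes "invertible M" and "transpose M = M"
  shows "transpose (matrix_inv M) = matrix_inv M"
proof -
  have "transpose (matrix_inv M) ** M = mat 1"
    by (metis assms matrix_inv_right matrix_transpose_mul transpose_mat)
  have "transpose (matrix_inv M) = transpose (matrix_inv M) ** (M ** matrix_inv M)"
    by (simp add: assms matrix_inv_right)
  also have "\<dots> = matrix_inv M"
    by (simp add: matrix_mul_assoc \<open>transpose (matrix_inv M) ** M = mat 1\<close>)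
  finally show ?thesis .
qed

lemma inner_matrix_vector_symmetric:
  fixes M :: "real^'n^'n"
  assumes "transpose M = M"
  shows "x \<bullet> (M *v y) = (M *v x) \<bullet> y"
  by (metis assms dot_lmul_matrix transpose_matrix_vector)

lemma pos_def_mat_invertible:
  fixes S :: "real^'n^'n"
  assumes "pos_def_mat S"
  shows "invertible S"
proof (rule invertible_if_kernel_trivial, rule ccontr)
  fix x assume "S *v x = 0" and "x \<noteq> 0"
  then show False using assms by (auto simp: pos_def_mat_def)
qed

lemma pos_def_mat_matrix_inv:
  fixes S :: "real^'n^'n"
  assumes "pos_def_mat S"
  shows "pos_def_mat (matrix_inv S)"
  unfolding pos_def_mat_def
proof (intro conjI allI impI)
  have inv: "invertible S" by (rule pos_def_mat_invertible[OF assms])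
  have sym: "transpose S = S" using assms by (simp add: pos_def_mat_def)
  show "transpose (matrix_inv S) = matrix_inv S"
    by (rule transpose_matrix_inv_symmetric[OF inv sym])
  fix x :: "real^'n" assume "x \<noteq> 0"
  define z where "z = matrix_inv S *v x"
  have x: "x = S *v z" by (simp add: z_def matrix_inv_cancel_left[OF inv])
  with \<open>x \<noteq> 0\<close> have "z \<noteq> 0" by auto
  then have "0 < z \<bullet> (S *v z)" using assms by (simp add: pos_def_mat_def)
  also have "\<dots> = x \<bullet> (matrix_inv S *v x)" by (metis x z_def inner_commute)
  finally show "0 < x \<bullet> (matrix_inv S *v x)" .
qed

lemma transpose_add:
  "transpose (A + B) = transpose A + transpose B"
  by (simp add: transpose_def vec_eq_iff)

lemma pos_def_mat_convex_combination:
  fixes A B :: "real^'n^'n"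
  assumes A: "pos_def_mat A" and B: "pos_def_mat B" and "0 \<le> a" "a \<le> 1"
  shows "pos_def_mat ((1 - a) *\<^sub>R A + a *\<^sub>R B)"
  unfolding pos_def_mat_def
proof (intro conjI allI impI)
  show "transpose ((1 - a) *\<^sub>R A + a *\<^sub>R B) = (1 - a) *\<^sub>R A + a *\<^sub>R B"
    using A B by (simp add: pos_def_mat_def transpose_add transpose_scalar)
  fix x :: "real^'n" assume "x \<noteq> 0"
  then have qA: "0 < x \<bullet> (A *v x)" and qB: "0 < x \<bullet> (B *v x)"
    using A B by (auto simp: pos_def_mat_def)
  have "x \<bullet> (((1 - a) *\<^sub>R A + a *\<^sub>R B) *v x) = (1 - a) * (x \<bullet> (A *v x)) + a * (x \<bullet> (B *v x))"
    by (simp add: matrix_vector_mult_add_rdistrib inner_add_right flip: scaleR_matrix_vector_assoc)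
  also have "\<dots> > 0"
  proof (cases "a = 0")
    case False
    then have "0 < a * (x \<bullet> (B *v x))" using qB \<open>0 \<le> a\<close> by simp
    moreover have "0 \<le> (1 - a) * (x \<bullet> (A *v x))" using qA \<open>a \<le> 1\<close> by simp
    ultimately show ?thesis by simp
  qed (use qA in simp)
  finally show "0 < x \<bullet> (((1 - a) *\<^sub>R A + a *\<^sub>R B) *v x)" .
qed

section \<open>Continuity and derivative of the matrix inverse\<close>

lemma tendsto_det [tendsto_intros]:
  fixes M :: "'a \<Rightarrow> real^'n^'n"
  assumes "(M \<longlongrightarrow> L) F"
  shows "((\<lambda>x. det (M x)) \<longlongrightarrow> det L) F"
  unfolding det_def by (intro tendsto_intros assms)

lemma tendsto_imp_eventually_invertible:
  fixes M :: "'a \<Rightarrow> real^'n^'n"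
  assumes "(M \<longlongrightarrow> L) F" and "invertible L"
  shows "\<forall>\<^sub>F x in F. invertible (M x)"
proof -
  have "\<forall>\<^sub>F x in F. det (M x) \<noteq> 0"
    using assms(2) invertible_det_nz
    by (intro tendsto_imp_eventually_ne[OF tendsto_det[OF assms(1)]]) blast
  then show ?thesis by (simp add: invertible_det_nz)
qed

lemma matrix_inv_nth_cramer:
  fixes M :: "real^'n^'n"
  assumes "invertible M"
  shows "matrix_inv M $ i $ j = det (\<chi> r c. if c = i then axis j 1 $ r else M $ r $ c) / det M"
proof -
  have "M *v (matrix_inv M *v axis j 1) = axis j 1"
    by (rule matrix_inv_cancel_left[OF assms])
  then have "matrix_inv M *v axis j 1 = (\<chi> k. det (\<chi> r c. if c = k then axis j 1 $ r else M $ r $ c) / det M)"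
    using assms by (simp add: cramer invertible_det_nz)
  then show ?thesis
    by (simp add: vec_eq_iff matrix_vector_mult_basis column_def)
qed

lemma tendsto_matrix_inv:
  fixes M :: "'a \<Rightarrow> real^'n^'n"
  assumes lim: "(M \<longlongrightarrow> L) F" and inv: "invertible L"
  shows "((\<lambda>x. matrix_inv (M x)) \<longlongrightarrow> matrix_inv L) F"
proof (intro vec_tendstoI)
  fix i j
  have "((\<lambda>x. det (\<chi> r c. if c = i then axis j 1 $ r else M x $ r $ c) / det (M x)) \<longlongrightarrow>
      matrix_inv L $ i $ j) F"
    unfolding matrix_inv_nth_cramer[OF inv] using inv
    by (intro tendsto_intros) (auto intro!: tendsto_vec_nth lim simp: invertible_det_nz)
  then show "((\<lambda>x. matrix_inv (M x) $ i $ j) \<longlongrightarrow> matrix_inv L $ i $ j) F"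
    by (rule Lim_transform_eventually)
      (use tendsto_imp_eventually_invertible[OF assms] in \<open>auto elim: eventually_mono simp: matrix_inv_nth_cramer\<close>)
qed

lemma has_vector_derivative_iff_tendsto_quotient:
  fixes f :: "real \<Rightarrow> 'a::real_normed_vector"
  shows "(f has_vector_derivative D) (at x) \<longleftrightarrow> ((\<lambda>y. (f y - f x) /\<^sub>R (y - x)) \<longlongrightarrow> D) (at x)"
proof -
  have "norm ((f y - f x - (y - x) *\<^sub>R D) /\<^sub>R norm (y - x)) = norm ((f y - f x) /\<^sub>R (y - x) - D)"
    if "y \<noteq> x" for y
  proof -
    have "(f y - f x) /\<^sub>R (y - x) - D = (f y - f x - (y - x) *\<^sub>R D) /\<^sub>R (y - x)"
      using that by (simp add: scaleR_diff_right)
    then show ?thesis by simp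
  qed
  then have "((\<lambda>y. (f y - f x - (y - x) *\<^sub>R D) /\<^sub>R norm (y - x)) \<longlongrightarrow> 0) (at x) \<longleftrightarrow>
      ((\<lambda>y. (f y - f x) /\<^sub>R (y - x) - D) \<longlongrightarrow> 0) (at x)"
    by (subst (1 2) tendsto_norm_zero_iff[symmetric], intro tendsto_cong)
      (auto simp: eventually_at_filter)
  then show ?thesis
    by (simp add: has_vector_derivative_def has_derivative_at_within bounded_linear_scaleR_left
        LIM_zero_iff)
qed

lemma bounded_bilinear_matrix_matrix_mult:
  "bounded_bilinear ((**) :: real^'n^'m \<Rightarrow> real^'p^'n \<Rightarrow> real^'p^'m)"
  unfolding bilinear_conv_bounded_bilinear[symmetric]
  by (auto simp: bilinear_def linear_iff matrix_add_ldistrib matrix_scalar_ac scalar_matrix_assoc)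
    (simp add: matrix_matrix_mult_def vec_eq_iff sum.distrib algebra_simps)

lemma bounded_bilinear_matrix_vector_mult:
  "bounded_bilinear ((*v) :: real^'n^'m \<Rightarrow> real^'n \<Rightarrow> real^'m)"
  unfolding bilinear_conv_bounded_bilinear[symmetric]
  by (auto simp: bilinear_def linear_iff matrix_vector_right_distrib matrix_vector_mult_add_rdistrib
      scaleR_matrix_vector_assoc matrix_vector_mult_scaleR)

lemmas matrix_diff_ldistrib = bounded_bilinear.diff_right[OF bounded_bilinear_matrix_matrix_mult]
lemmas matrix_diff_rdistrib = bounded_bilinear.diff_left[OF bounded_bilinear_matrix_matrix_mult]
lemmas tendsto_matrix_matrix_mult [tendsto_intros] =
  bounded_bilinear.tendsto[OF bounded_bilinear_matrix_matrix_mult]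
lemmas has_vector_derivative_matrix_matrix_mult =
  bounded_bilinear.has_vector_derivative[OF bounded_bilinear_matrix_matrix_mult]
lemmas has_vector_derivative_matrix_vector_mult =
  bounded_bilinear.has_vector_derivative[OF bounded_bilinear_matrix_vector_mult]

lemma has_vector_derivative_matrix_inv:
  fixes M :: "real \<Rightarrow> real^'n^'n"
  assumes M: "(M has_vector_derivative M') (at a)" and inv: "invertible (M a)"
  shows "((\<lambda>s. matrix_inv (M s)) has_vector_derivative
           - (matrix_inv (M a) ** M' ** matrix_inv (M a))) (at a)"
proof -
  define P where "P s = matrix_inv (M s)" for s
  have M_lim: "(M \<longlongrightarrow> M a) (at a)"
    using has_vector_derivative_continuous[OF M] by (simp add: isCont_def)
  have "((\<lambda>s. - (P s ** ((M s - M a) /\<^sub>R (s - a)) ** P a)) \<longlongrightarrow> - (P a ** M' ** P a)) (at a)"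
    using M unfolding P_def has_vector_derivative_iff_tendsto_quotient
    by (intro tendsto_intros tendsto_matrix_inv[OF M_lim inv])
  moreover have "\<forall>\<^sub>F s in at a. - (P s ** ((M s - M a) /\<^sub>R (s - a)) ** P a) = (P s - P a) /\<^sub>R (s - a)"
    using tendsto_imp_eventually_invertible[OF M_lim inv]
  proof (rule eventually_mono)
    fix s assume "invertible (M s)"
    then have "P s ** (M s - M a) ** P a = P a - P s"
      by (simp add: P_def matrix_diff_ldistrib matrix_diff_rdistrib matrix_inv_left matrix_inv_right
          inv flip: matrix_mul_assoc)
    then show "- (P s ** ((M s - M a) /\<^sub>R (s - a)) ** P a) = (P s - P a) /\<^sub>R (s - a)"
      by (simp only: bounded_bilinear.scaleR_right[OF bounded_bilinear_matrix_matrix_mult]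
          bounded_bilinear.scaleR_left[OF bounded_bilinear_matrix_matrix_mult]
          scaleR_minus_right[symmetric] minus_diff_eq)
  qed
  ultimately show ?thesis
    unfolding has_vector_derivative_iff_tendsto_quotient P_def by (rule Lim_transform_eventually)
qed

section \<open>The ridgeline\<close>

lemma matrix_inv_convex_combination_swap:
  fixes A B :: "real^'n^'n"
  assumes inv: "invertible ((1 - s) *\<^sub>R A + s *\<^sub>R B)"
  shows "A ** matrix_inv ((1 - s) *\<^sub>R A + s *\<^sub>R B) ** B = B ** matrix_inv ((1 - s) *\<^sub>R A + s *\<^sub>R B) ** A"
proof (rule iffD2[OF matrix_eq], rule allI)
  fix v :: "real^'n"
  define S where "S = (1 - s) *\<^sub>R A + s *\<^sub>R B"
  define y where "y = matrix_inv S *v (B *v v)"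
  define z where "z = matrix_inv S *v (A *v v)"
  have S_apply: "S *v u = (1 - s) *\<^sub>R (A *v u) + s *\<^sub>R (B *v u)" for u
    by (simp add: S_def matrix_vector_mult_add_rdistrib flip: scaleR_matrix_vector_assoc)
  have Sy: "(1 - s) *\<^sub>R (A *v y) + s *\<^sub>R (B *v y) = B *v v"
    using matrix_inv_cancel_left[OF inv] by (simp add: y_def S_def[symmetric] flip: S_apply)
  have Sz: "(1 - s) *\<^sub>R (A *v z) + s *\<^sub>R (B *v z) = A *v v"
    using matrix_inv_cancel_left[OF inv] by (simp add: z_def S_def[symmetric] flip: S_apply)
  \<comment> \<open>\<open>v = s y + (1 - s) z\<close>, because \<open>S\<close> maps both sides to \<open>(1 - s) A v + s B v\<close>\<close>
  have "S *v (v - s *\<^sub>R y - (1 - s) *\<^sub>R z) = 0"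
    using Sy Sz by (simp add: S_apply algebra_simps)
  then have v: "v = s *\<^sub>R y + (1 - s) *\<^sub>R z"
    using matrix_inv_cancel_right[OF inv, of "v - s *\<^sub>R y - (1 - s) *\<^sub>R z"]
    by (simp add: S_def algebra_simps)
  have "A *v y = B *v z"
  proof -
    have "A *v y - B *v z = (B - A) *v (v - s *\<^sub>R y - (1 - s) *\<^sub>R z)"
      using Sy Sz by (simp add: algebra_simps)
    then show ?thesis using v by simp
  qed
  then show "(A ** matrix_inv S ** B) *v v = (B ** matrix_inv S ** A) *v v"
    by (simp add: y_def z_def matrix_vector_mul_assoc[symmetric])
qed

lemma convex_combination_residuals:
  fixes A B :: "real^'n^'n" and mu1 mu2 :: "real^'n" and s :: real
  defines "P \<equiv> matrix_inv ((1 - s) *\<^sub>R A + s *\<^sub>R B)"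
  defines "x \<equiv> P *v ((1 - s) *\<^sub>R (A *v mu1) + s *\<^sub>R (B *v mu2))"
  defines "h \<equiv> (B ** P ** A) *v (mu2 - mu1)"
  assumes inv: "invertible ((1 - s) *\<^sub>R A + s *\<^sub>R B)"
  shows "A *v (x - mu1) = s *\<^sub>R h" and "B *v (x - mu2) = - ((1 - s) *\<^sub>R h)"
proof -
  define S where "S = (1 - s) *\<^sub>R A + s *\<^sub>R B"
  have S_apply: "S *v u = (1 - s) *\<^sub>R (A *v u) + s *\<^sub>R (B *v u)" for u
    by (simp add: S_def matrix_vector_mult_add_rdistrib flip: scaleR_matrix_vector_assoc)
  have solve: "u = P *v w" if "S *v u = w" for u w
    using matrix_inv_cancel_right[OF inv, of u] that by (simp add: P_def S_def)
  have x_sol: "S *v x = (1 - s) *\<^sub>R (A *v mu1) + s *\<^sub>R (B *v mu2)"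
    unfolding x_def P_def S_def by (rule matrix_inv_cancel_left[OF inv])
  have "S *v (x - mu1) = S *v x - S *v mu1"
    by (rule matrix_vector_mult_diff_distrib)
  also have "\<dots> = s *\<^sub>R (B *v (mu2 - mu1))"
    unfolding x_sol by (simp add: S_apply algebra_simps)
  finally have "x - mu1 = P *v (s *\<^sub>R (B *v (mu2 - mu1)))"
    by (rule solve)
  then show "A *v (x - mu1) = s *\<^sub>R h"
    using matrix_inv_convex_combination_swap[OF inv]
    by (simp add: h_def P_def matrix_vector_mult_scaleR matrix_vector_mul_assoc matrix_mul_assoc)
  have "S *v (x - mu2) = S *v x - S *v mu2"
    by (rule matrix_vector_mult_diff_distrib)
  also have "\<dots> = - ((1 - s) *\<^sub>R (A *v (mu2 - mu1)))"
    unfolding x_sol by (simp add: S_apply algebra_simps)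
  finally have "x - mu2 = P *v (- ((1 - s) *\<^sub>R (A *v (mu2 - mu1))))"
    by (rule solve)
  then show "B *v (x - mu2) = - ((1 - s) *\<^sub>R h)"
    by (simp add: h_def matrix_vector_mult_scaleR matrix_vector_mul_assoc matrix_mul_assoc
        bounded_bilinear.minus_right[OF bounded_bilinear_matrix_vector_mult])
qed

lemma ridgeline_residuals:
  fixes Sig1 Sig2 :: "real^'n^'n" and mu1 mu2 :: "real^'n" and s :: real
  defines "h \<equiv> (matrix_inv Sig2 ** matrix_inv (S_mat Sig1 Sig2 s) ** matrix_inv Sig1) *v (mu2 - mu1)"
  assumes inv: "invertible (S_mat Sig1 Sig2 s)"
  shows "matrix_inv Sig1 *v (ridgeline mu1 Sig1 mu2 Sig2 s - mu1) = s *\<^sub>R h"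
    and "matrix_inv Sig2 *v (ridgeline mu1 Sig1 mu2 Sig2 s - mu2) = - ((1 - s) *\<^sub>R h)"
  using convex_combination_residuals[of s "matrix_inv Sig1" "matrix_inv Sig2" mu1 mu2] inv
  by (simp_all add: h_def ridgeline_def S_mat_def)

lemma ridgeline_has_vector_derivative:
  fixes Sig1 Sig2 :: "real^'n^'n" and s :: real
  defines "P \<equiv> matrix_inv (S_mat Sig1 Sig2 s)"
  assumes inv: "invertible (S_mat Sig1 Sig2 s)"
  shows "(ridgeline mu1 Sig1 mu2 Sig2 has_vector_derivative
           P *v ((matrix_inv Sig2 ** P ** matrix_inv Sig1) *v (mu2 - mu1))) (at s)"
proof -
  define A where "A = matrix_inv Sig1"
  define B where "B = matrix_inv Sig2"
  define b where "b t = (1 - t) *\<^sub>R (A *v mu1) + t *\<^sub>R (B *v mu2)" for t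
  define x where "x = P *v b s"
  have S': "((\<lambda>t. S_mat Sig1 Sig2 t) has_vector_derivative B - A) (at s)"
    unfolding S_mat_def A_def B_def by (auto intro!: derivative_eq_intros)
  have b': "(b has_vector_derivative B *v mu2 - A *v mu1) (at s)"
    unfolding b_def by (auto intro!: derivative_eq_intros)
  have "(ridgeline mu1 Sig1 mu2 Sig2 has_vector_derivative
      P *v (B *v mu2 - A *v mu1) + (- (P ** (B - A) ** P)) *v b s) (at s)"
    unfolding ridgeline_def P_def A_def[symmetric] B_def[symmetric] b_def[symmetric]
    by (intro has_vector_derivative_matrix_vector_mult has_vector_derivative_matrix_inv S' b' inv)
  moreover have "P *v (B *v mu2 - A *v mu1) + (- (P ** (B - A) ** P)) *v b s
      = P *v (A *v (x - mu1) - B *v (x - mu2))"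
    by (simp add: x_def bounded_bilinear.minus_left[OF bounded_bilinear_matrix_vector_mult]
        matrix_vector_mul_assoc[symmetric] algebra_simps)
  moreover have "A *v (x - mu1) - B *v (x - mu2) = (B ** P ** A) *v (mu2 - mu1)"
    using ridgeline_residuals[OF inv, of mu1 mu2]
    by (simp add: x_def b_def A_def B_def P_def ridgeline_def flip: scaleR_add_left)
  ultimately show ?thesis by (simp add: A_def B_def)
qed

definition ridge_p :: "real^'n \<Rightarrow> real^'n^'n \<Rightarrow> real^'n \<Rightarrow> real^'n^'n \<Rightarrow> real \<Rightarrow> real" where
  "ridge_p mu1 Sig1 mu2 Sig2 a =
     (let Si = matrix_inv (S_mat Sig1 Sig2 a);
          d = mu2 - mu1
      in d \<bullet> ((matrix_inv Sig1 ** Si ** matrix_inv Sig2 ** Si ** matrix_inv Sig2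
                ** Si ** matrix_inv Sig1) *v d))"

lemma ridge_p_eq_inner:
  fixes Sig1 Sig2 :: "real^'n^'n" and mu1 mu2 :: "real^'n" and s :: real
  defines "P \<equiv> matrix_inv (S_mat Sig1 Sig2 s)"
  defines "h \<equiv> (matrix_inv Sig2 ** P ** matrix_inv Sig1) *v (mu2 - mu1)"
  assumes pd1: "pos_def_mat Sig1" and pd2: "pos_def_mat Sig2"
    and inv: "invertible (S_mat Sig1 Sig2 s)"
  shows "ridge_p mu1 Sig1 mu2 Sig2 s = (P *v h) \<bullet> h"
proof -
  define A where "A = matrix_inv Sig1"
  define B where "B = matrix_inv Sig2"
  define d where "d = mu2 - mu1"
  have sA: "transpose A = A" and sB: "transpose B = B"
    using pos_def_mat_matrix_inv[OF pd1] pos_def_mat_matrix_inv[OF pd2]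
    by (simp_all add: A_def B_def pos_def_mat_def)
  have "transpose (S_mat Sig1 Sig2 s) = S_mat Sig1 Sig2 s"
    using sA sB by (simp add: S_mat_def A_def B_def transpose_add transpose_scalar)
  then have sP: "transpose P = P"
    unfolding P_def by (rule transpose_matrix_inv_symmetric[OF inv])
  have "ridge_p mu1 Sig1 mu2 Sig2 s = d \<bullet> (A *v (P *v (B *v (P *v (B *v (P *v (A *v d)))))))"
    by (simp add: ridge_p_def Let_def A_def B_def P_def d_def matrix_vector_mul_assoc matrix_mul_assoc)
  also have "\<dots> = (P *v (A *v d)) \<bullet> (B *v (P *v (B *v (P *v (A *v d)))))"
    by (simp add: inner_matrix_vector_symmetric[OF sA] inner_matrix_vector_symmetric[OF sP])
  also have "\<dots> = (B *v (P *v (A *v d))) \<bullet> (P *v (B *v (P *v (A *v d))))"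
    by (rule inner_matrix_vector_symmetric[OF sB])
  also have "\<dots> = (P *v h) \<bullet> h"
    by (simp add: h_def A_def B_def d_def inner_commute matrix_vector_mul_assoc matrix_mul_assoc)
  finally show ?thesis .
qed

lemma ridge_p_has_real_derivative:
  fixes Sig1 Sig2 :: "real^'n^'n"
  assumes inv: "invertible (S_mat Sig1 Sig2 a)"
  obtains p' where "(ridge_p mu1 Sig1 mu2 Sig2 has_real_derivative p') (at a)"
proof -
  define A where "A = matrix_inv Sig1"
  define B where "B = matrix_inv Sig2"
  define P where "P s = matrix_inv (S_mat Sig1 Sig2 s)" for s
  define d where "d = mu2 - mu1"
  have "((\<lambda>t. S_mat Sig1 Sig2 t) has_vector_derivative B - A) (at a)"
    unfolding S_mat_def A_def B_def by (auto intro!: derivative_eq_intros)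
  from has_vector_derivative_matrix_inv[OF this inv]
  obtain P' where P': "(P has_vector_derivative P') (at a)"
    unfolding P_def by blast
  have "\<exists>D. ((\<lambda>s. d \<bullet> ((A ** P s ** B ** P s ** B ** P s ** A) *v d)) has_vector_derivative D) (at a)"
    by (rule exI, (rule bounded_bilinear.has_vector_derivative[OF bounded_bilinear_inner]
        has_vector_derivative_matrix_vector_mult has_vector_derivative_matrix_matrix_mult
        has_vector_derivative_const P')+)
  then obtain D where "((\<lambda>s. d \<bullet> ((A ** P s ** B ** P s ** B ** P s ** A) *v d)) has_vector_derivative D) (at a)"
    by blast
  then have "(ridge_p mu1 Sig1 mu2 Sig2 has_real_derivative D) (at a)"
    by (simp add: ridge_p_def[abs_def] Let_def A_def B_def P_def d_def
        has_real_derivative_iff_has_vector_derivative)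
  then show ?thesis by (rule that)
qed

section \<open>The densities along the ridgeline\<close>

lemma has_real_derivative_normal_density_along:
  fixes x :: "real \<Rightarrow> real^'n"
  assumes sym: "transpose (matrix_inv Sig) = matrix_inv Sig"
    and x: "(x has_vector_derivative x') (at s)"
  shows "((\<lambda>t. normal_density (x t) mu Sig) has_real_derivative
           - (x' \<bullet> (matrix_inv Sig *v (x s - mu))) * normal_density (x s) mu Sig) (at s)"
proof -
  define A where "A = matrix_inv Sig"
  have xc: "((\<lambda>t. x t - mu) has_vector_derivative x') (at s)"
    using x by (simp add: has_vector_derivative_diff_const)
  have "((\<lambda>t. (x t - mu) \<bullet> (A *v (x t - mu))) has_vector_derivative
      (x s - mu) \<bullet> (A *v x') + x' \<bullet> (A *v (x s - mu))) (at s)"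
    by (intro bounded_bilinear.has_vector_derivative[OF bounded_bilinear_inner] xc
        bounded_linear.has_vector_derivative[OF matrix_vector_mul_bounded_linear])
  moreover have "(x s - mu) \<bullet> (A *v x') = x' \<bullet> (A *v (x s - mu))"
    using sym by (simp add: A_def inner_matrix_vector_symmetric inner_commute)
  ultimately have "((\<lambda>t. (x t - mu) \<bullet> (A *v (x t - mu))) has_real_derivative
      2 * (x' \<bullet> (A *v (x s - mu)))) (at s)"
    by (simp add: has_real_derivative_iff_has_vector_derivative)
  then show ?thesis
    unfolding normal_density_def A_def[symmetric]
    by (auto intro!: derivative_eq_intros)
qed

lemma normal_density_nonzero:
  assumes "det Sig \<noteq> 0"
  shows "normal_density x mu Sig \<noteq> 0"
  using assms by (simp add: normal_density_def powr_def)

lemma phi_ridge_has_real_derivative: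
  fixes Sig1 Sig2 :: "real^'n^'n" and mu1 mu2 :: "real^'n" and s :: real
  assumes pd1: "pos_def_mat Sig1" and pd2: "pos_def_mat Sig2"
    and inv: "invertible (S_mat Sig1 Sig2 s)"
  shows "(phi_ridge mu1 Sig1 mu2 Sig2 mu1 Sig1 has_real_derivative
           - s * ridge_p mu1 Sig1 mu2 Sig2 s * phi_ridge mu1 Sig1 mu2 Sig2 mu1 Sig1 s) (at s)"
    and "(phi_ridge mu1 Sig1 mu2 Sig2 mu2 Sig2 has_real_derivative
           (1 - s) * ridge_p mu1 Sig1 mu2 Sig2 s * phi_ridge mu1 Sig1 mu2 Sig2 mu2 Sig2 s) (at s)"
proof -
  define P where "P = matrix_inv (S_mat Sig1 Sig2 s)"
  define h where "h = (matrix_inv Sig2 ** P ** matrix_inv Sig1) *v (mu2 - mu1)"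
  have sym: "transpose (matrix_inv Sig1) = matrix_inv Sig1" "transpose (matrix_inv Sig2) = matrix_inv Sig2"
    using pos_def_mat_matrix_inv[OF pd1] pos_def_mat_matrix_inv[OF pd2] by (simp_all add: pos_def_mat_def)
  note x' = ridgeline_has_vector_derivative[OF inv, of mu1 mu2, folded P_def h_def]
  note residuals = ridgeline_residuals[OF inv, of mu1 mu2, folded P_def h_def]
  note p_eq = ridge_p_eq_inner[OF pd1 pd2 inv, of mu1 mu2, folded P_def h_def]
  show "(phi_ridge mu1 Sig1 mu2 Sig2 mu1 Sig1 has_real_derivative
           - s * ridge_p mu1 Sig1 mu2 Sig2 s * phi_ridge mu1 Sig1 mu2 Sig2 mu1 Sig1 s) (at s)"
    using has_real_derivative_normal_density_along[OF sym(1) x', of mu1]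
    by (simp add: phi_ridge_def[abs_def] residuals p_eq)
  show "(phi_ridge mu1 Sig1 mu2 Sig2 mu2 Sig2 has_real_derivative
           (1 - s) * ridge_p mu1 Sig1 mu2 Sig2 s * phi_ridge mu1 Sig1 mu2 Sig2 mu2 Sig2 s) (at s)"
    using has_real_derivative_normal_density_along[OF sym(2) x', of mu2]
    by (simp add: phi_ridge_def[abs_def] residuals p_eq)
qed

lemma curvature_eq_of_log_derivatives:
  fixes f1 f2 p :: "real \<Rightarrow> real"
  assumes f1: "\<forall>\<^sub>F s in nhds a. (f1 has_real_derivative - s * p s * f1 s) (at s)"
    and f2: "\<forall>\<^sub>F s in nhds a. (f2 has_real_derivative (1 - s) * p s * f2 s) (at s)"
    and p: "(p has_real_derivative p') (at a)"
    and nz: "f1 a \<noteq> 0" "f2 a \<noteq> 0"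
  shows "deriv (deriv f2) a * deriv f1 a / (f2 a * f1 a)
           - deriv (deriv f1) a * deriv f2 a / (f1 a * f2 a)
         = (p a)\<^sup>2 * (1 - a * (1 - a) * p a)"
proof -
  have f1a: "(f1 has_real_derivative - a * p a * f1 a) (at a)"
    using eventually_nhds_x_imp_x[OF f1] .
  have f2a: "(f2 has_real_derivative (1 - a) * p a * f2 a) (at a)"
    using eventually_nhds_x_imp_x[OF f2] .
  have "deriv (deriv f1) a = deriv (\<lambda>s. - s * p s * f1 s) a"
    by (rule deriv_cong_ev[OF eventually_mono[OF f1] refl]) (rule DERIV_imp_deriv)
  also have "\<dots> = (- p a - a * p' + a\<^sup>2 * (p a)\<^sup>2) * f1 a"
    using p f1a
    by (intro DERIV_imp_deriv) (auto intro!: derivative_eq_intros simp: power2_eq_square algebra_simps)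
  finally have dd1: "deriv (deriv f1) a = (- p a - a * p' + a\<^sup>2 * (p a)\<^sup>2) * f1 a" .
  have "deriv (deriv f2) a = deriv (\<lambda>s. (1 - s) * p s * f2 s) a"
    by (rule deriv_cong_ev[OF eventually_mono[OF f2] refl]) (rule DERIV_imp_deriv)
  also have "\<dots> = (- p a + (1 - a) * p' + (1 - a)\<^sup>2 * (p a)\<^sup>2) * f2 a"
    using p f2a
    by (intro DERIV_imp_deriv) (auto intro!: derivative_eq_intros simp: power2_eq_square algebra_simps)
  finally have dd2: "deriv (deriv f2) a = (- p a + (1 - a) * p' + (1 - a)\<^sup>2 * (p a)\<^sup>2) * f2 a" .
  show ?thesis
    using nz by (simp add: dd1 dd2 DERIV_imp_deriv[OF f1a] DERIV_imp_deriv[OF f2a] field_simps)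
      (simp add: power2_eq_square algebra_simps)
qed

theorem theorem3:
  fixes mu1 mu2 :: "real^'n" and Sig1 Sig2 :: "real^'n^'n" and a :: real
  assumes "pos_def_mat Sig1" and "pos_def_mat Sig2"
    and "0 \<le> a" and "a \<le> 1"
  shows "kappa mu1 Sig1 mu2 Sig2 a =
    (let Si = matrix_inv (S_mat Sig1 Sig2 a);
         d = mu2 - mu1;
         p = d \<bullet> ((matrix_inv Sig1 ** Si ** matrix_inv Sig2 ** Si ** matrix_inv Sig2
                    ** Si ** matrix_inv Sig1) *v d)
     in p\<^sup>2 * (1 - a * (1 - a) * p))"
proof -
  have inv: "invertible (S_mat Sig1 Sig2 a)"
    unfolding S_mat_def using assms
    by (intro pos_def_mat_invertible pos_def_mat_convex_combination pos_def_mat_matrix_inv)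
  have "((\<lambda>s. S_mat Sig1 Sig2 s) \<longlongrightarrow> S_mat Sig1 Sig2 a) (nhds a)"
    unfolding S_mat_def by (intro tendsto_intros filterlim_ident)
  then have inv_near: "\<forall>\<^sub>F s in nhds a. invertible (S_mat Sig1 Sig2 s)"
    using inv by (rule tendsto_imp_eventually_invertible)
  have "\<forall>\<^sub>F s in nhds a. (phi_ridge mu1 Sig1 mu2 Sig2 mu1 Sig1 has_real_derivative
      - s * ridge_p mu1 Sig1 mu2 Sig2 s * phi_ridge mu1 Sig1 mu2 Sig2 mu1 Sig1 s) (at s)"
    "\<forall>\<^sub>F s in nhds a. (phi_ridge mu1 Sig1 mu2 Sig2 mu2 Sig2 has_real_derivative
      (1 - s) * ridge_p mu1 Sig1 mu2 Sig2 s * phi_ridge mu1 Sig1 mu2 Sig2 mu2 Sig2 s) (at s)"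
    using eventually_mono[OF inv_near phi_ridge_has_real_derivative(1)[OF assms(1,2)]]
      eventually_mono[OF inv_near phi_ridge_has_real_derivative(2)[OF assms(1,2)]]
    by simp_all
  moreover obtain p' where "(ridge_p mu1 Sig1 mu2 Sig2 has_real_derivative p') (at a)"
    using ridge_p_has_real_derivative[OF inv] .
  moreover have "phi_ridge mu1 Sig1 mu2 Sig2 mu1 Sig1 a \<noteq> 0" "phi_ridge mu1 Sig1 mu2 Sig2 mu2 Sig2 a \<noteq> 0"
    using assms(1,2)
    by (simp_all add: phi_ridge_def normal_density_nonzero pos_def_mat_invertible flip: invertible_det_nz)
  ultimately have "kappa mu1 Sig1 mu2 Sig2 a
      = (ridge_p mu1 Sig1 mu2 Sig2 a)\<^sup>2 * (1 - a * (1 - a) * ridge_p mu1 Sig1 mu2 Sig2 a)"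
    unfolding kappa_def Let_def by (rule curvature_eq_of_log_derivatives)
  then show ?thesis by (simp add: ridge_p_def Let_def)
qed

end
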